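(* Let $m\ge1$, $n\ge1$, $N>2n$, let $\Sigma_0,\dots,\Sigma_n\in\mathbb R^{m\times m}$ and let $\mathbf T_n$ be the block-Toeplitz matrix whose $(i,j)$ block ($i,j=0,\dots,n$) is $\Sigma_{i-j}$ if $i\ge j$ and $\Sigma_{j-i}^\top$ if $i<j$. Assume there exists a symmetric positive definite $mN\times mN$ matrix $\bar{\boldsymbol\Sigma}_N$ with $E_n^\top\bar{\boldsymbol\Sigma}_NE_n=\mathbf T_n$ and $\mathbf U_N^\top\bar{\boldsymbol\Sigma}_N\mathbf U_N=\bar{\boldsymbol\Sigma}_N$. Let $(\Lambda_k,\Theta_k)$, $k\ge1$, be a sequence in $\mathcal L_+$ with $\|(\Lambda_k,\Theta_k)\|\to\infty$. Then $\|A(\Lambda_k,\Theta_k)\|\to\infty$, and consequently $J(\Lambda_k,\Theta_k)\to\infty$, where $J(\Lambda,\Theta)=\operatorname{Tr}(\Lambda\mathbf T_n)-\log\det A(\Lambda,\Theta)$.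
   Context: $\mathfrak S_k$ denotes the space of real symmetric $mk\times mk$ matrices. $E_n$ is the $mN\times m(n+1)$ matrix with $N\times(n+1)$ blocks of size $m\times m$ whose $(i,i)$ blocks ($i=1,\dots,n+1$) are $I_m$ and other blocks $0$. $\mathbf U_N$ is the $mN\times mN$ block shift matrix whose $(i,i+1)$ blocks ($i=1,\dots,N-1$) and $(N,1)$ block are $I_m$, others $0$. The linear map $A:\mathfrak S_{n+1}\times\mathfrak S_N\to\mathfrak S_N$ is $A(\Lambda,\Theta)=E_n\Lambda E_n^\top+\mathbf U_N\Theta\mathbf U_N^\top-\Theta$, and $\mathcal L_+=\{(\Lambda,\Theta)\in(\ker A)^\perp:A(\Lambda,\Theta)>0\}$, orthogonality and norms being with respect to the Frobenius-type inner product $\langle(\Lambda_1,\Theta_1),(\Lambda_2,\Theta_2)\rangle=\operatorname{Tr}(\Lambda_1\Lambda_2)+\operatorname{Tr}(\Theta_1\Theta_2)$ (any norms may be used since all spaces are finite-dimensional). *)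

theory Defs
  imports Complex_Main "Jordan_Normal_Form.Matrix" "Jordan_Normal_Form.Determinant"
begin

(* All block indices are 0-based: blocks are m x m, block (p,q) of a matrix M
   consists of entries (p*m + a, q*m + b), a,b < m. *)

definition mtrace :: "real mat \<Rightarrow> real" where
  "mtrace M = (\<Sum>i<dim_row M. M $$ (i,i))"

definition fro :: "real mat \<Rightarrow> real" where
  "fro M = sqrt (\<Sum>i<dim_row M. \<Sum>j<dim_col M. (M $$ (i,j))^2)"

definition symS :: "nat \<Rightarrow> nat \<Rightarrow> real mat set" where
  "symS m k = {M. M \<in> carrier_mat (m*k) (m*k) \<and> transpose_mat M = M}"

definition posdef :: "nat \<Rightarrow> real mat \<Rightarrow> bool" where
  "posdef k M \<longleftrightarrow> M \<in> carrier_mat k k \<and> transpose_mat M = M \<and>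
     (\<forall>v\<in>carrier_vec k. v \<noteq> 0\<^sub>v k \<longrightarrow> v \<bullet> (M *\<^sub>v v) > 0)"

definition Emat :: "nat \<Rightarrow> nat \<Rightarrow> nat \<Rightarrow> real mat" where
  "Emat m n N = mat (m*N) (m*(n+1))
     (\<lambda>(i,j). if i div m = j div m \<and> i mod m = j mod m then 1 else 0)"

definition Umat :: "nat \<Rightarrow> nat \<Rightarrow> real mat" where
  "Umat m N = mat (m*N) (m*N)
     (\<lambda>(i,j). if j div m = (i div m + 1) mod N \<and> i mod m = j mod m then 1 else 0)"

definition Tmat :: "nat \<Rightarrow> nat \<Rightarrow> (nat \<Rightarrow> real mat) \<Rightarrow> real mat" where
  "Tmat m n Sig = mat (m*(n+1)) (m*(n+1))
     (\<lambda>(i,j). if i div m \<ge> j div m then Sig (i div m - j div m) $$ (i mod m, j mod m)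
              else transpose_mat (Sig (j div m - i div m)) $$ (i mod m, j mod m))"

definition Aop :: "nat \<Rightarrow> nat \<Rightarrow> nat \<Rightarrow> real mat \<times> real mat \<Rightarrow> real mat" where
  "Aop m n N LT = Emat m n N * fst LT * transpose_mat (Emat m n N)
     + Umat m N * snd LT * transpose_mat (Umat m N) - snd LT"

definition pinner :: "real mat \<times> real mat \<Rightarrow> real mat \<times> real mat \<Rightarrow> real" where
  "pinner X Y = mtrace (fst X * fst Y) + mtrace (snd X * snd Y)"

definition pnorm :: "real mat \<times> real mat \<Rightarrow> real" where
  "pnorm X = sqrt (pinner X X)"

definition Lplus :: "nat \<Rightarrow> nat \<Rightarrow> nat \<Rightarrow> (real mat \<times> real mat) set" where
  "Lplus m n N = {X. fst X \<in> symS m (n+1) \<and> snd X \<in> symS m N \<and>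
     (\<forall>Y. fst Y \<in> symS m (n+1) \<and> snd Y \<in> symS m N \<and> Aop m n N Y = 0\<^sub>m (m*N) (m*N)
          \<longrightarrow> pinner X Y = 0) \<and>
     posdef (m*N) (Aop m n N X)}"

definition Jfun :: "nat \<Rightarrow> nat \<Rightarrow> nat \<Rightarrow> (nat \<Rightarrow> real mat) \<Rightarrow> real mat \<times> real mat \<Rightarrow> real" where
  "Jfun m n N Sig X = mtrace (fst X * Tmat m n Sig) - ln (det (Aop m n N X))"

end

theory Submission
  imports Defs
begin

text \<open>
  Write \<open>A\<close> for the linear map of the statement. Restricted to the symmetric part of \<open>(ker A)\<^sup>\<perp>\<close> it
  is injective, so by compactness of the unit sphere it is bounded below:
  \<open>c \<parallel>(\<Lambda>,\<Theta>)\<parallel> \<le> \<parallel>A(\<Lambda>,\<Theta>)\<parallel>\<close> for some \<open>c > 0\<close>.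

  For the second, let \<open>S\<close> be the given covariance, with \<open>S \<ge> \<epsilon> I\<close>. The invariance conditions on \<open>S\<close>
  give \<open>tr(\<Lambda> T\<^sub>n) = tr(A(\<Lambda>,\<Theta>) S) \<ge> \<epsilon> tr A(\<Lambda>,\<Theta>)\<close>, while for a positive definite \<open>A\<close> of size
  \<open>d\<close> every entry is bounded by \<open>t = tr A\<close>, so \<open>det A \<le> d! t\<^sup>d\<close> and \<open>\<parallel>A\<parallel> \<le> d t\<close>. Hence
  \<open>J \<ge> \<epsilon> t - log d! - d log t\<close> with \<open>t \<rightarrow> \<infinity>\<close>.
\<close>

section \<open>Elementary real analysis\<close>

lemma finite_bounded_convergent_subseq:
  fixes f :: "nat \<Rightarrow> 'i \<Rightarrow> real"
  assumes "finite I" and "\<And>k i. i \<in> I \<Longrightarrow> \<bar>f k i\<bar> \<le> C"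
  shows "\<exists>r. strict_mono r \<and> (\<forall>i\<in>I. convergent (\<lambda>k. f (r k) i))"
  using assms
proof (induction I rule: finite_induct)
  case empty
  then show ?case by (intro exI[of _ id]) (auto simp: strict_mono_def)
next
  case (insert a I)
  then obtain g where g: "strict_mono g" "\<forall>i\<in>I. convergent (\<lambda>k. f (g k) i)" by auto
  obtain s where s: "strict_mono s" "monoseq (\<lambda>k. f (g (s k)) a)"
    using seq_monosub[of "\<lambda>k. f (g k) a"] by blast
  have "Bseq (\<lambda>k. f (g (s k)) a)"
    using insert.prems by (intro BseqI'[of _ C]) auto
  then have "convergent (\<lambda>k. f (g (s k)) a)"
    using s(2) Bseq_monoseq_convergent by blast
  moreover have "convergent (\<lambda>k. f (g (s k)) i)" if "i \<in> I" for i
    using convergent_subseq_convergent[OF g(2)[rule_format, OF that] s(1)] by (simp add: o_def)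
  moreover have "strict_mono (\<lambda>k. g (s k))" using strict_mono_o[OF g(1) s(1)] by (simp add: o_def)
  ultimately show ?case by (intro exI[of _ "\<lambda>k. g (s k)"]) auto
qed

lemma unit_seq_convergent_subseq:
  fixes F :: "nat \<Rightarrow> 'i \<Rightarrow> real"
  assumes "finite I" and unit: "\<And>k. (\<Sum>i\<in>I. F k i * F k i) = 1"
  obtains r h where "strict_mono r" "\<And>i. i \<in> I \<Longrightarrow> (\<lambda>k. F (r k) i) \<longlonglongrightarrow> h i"
    "(\<Sum>i\<in>I. h i * h i) = 1"
proof -
  have "\<bar>F k i\<bar> \<le> 1" if "i \<in> I" for k i
  proof -
    have "F k i * F k i \<le> (\<Sum>i\<in>I. F k i * F k i)"
      using assms(1) that by (intro member_le_sum) auto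
    then show ?thesis using unit by (metis abs_le_square_iff abs_one mult_1 power2_eq_square)
  qed
  then obtain r where r: "strict_mono r" "\<forall>i\<in>I. convergent (\<lambda>k. F (r k) i)"
    using finite_bounded_convergent_subseq[OF assms(1), of F 1] by blast
  define h where "h i = lim (\<lambda>k. F (r k) i)" for i
  have lim: "(\<lambda>k. F (r k) i) \<longlonglongrightarrow> h i" if "i \<in> I" for i
    using r(2) that unfolding h_def by (simp add: convergent_LIMSEQ_iff)
  then have "(\<lambda>k. \<Sum>i\<in>I. F (r k) i * F (r k) i) \<longlonglongrightarrow> (\<Sum>i\<in>I. h i * h i)"
    by (intro tendsto_intros)
  then have "(\<Sum>i\<in>I. h i * h i) = 1" using unit by (simp add: LIMSEQ_const_iff)
  with r(1) lim show ?thesis by (rule that)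
qed

lemma linear_minus_log_at_top:
  fixes eps C D :: real
  assumes "eps > 0"
  shows "filterlim (\<lambda>t. eps * t - (C + D * ln t)) at_top at_top"
proof -
  have "((\<lambda>t. eps - D * (ln t / t)) \<longlongrightarrow> eps - D * 0) at_top"
    by (intro tendsto_intros ln_x_over_x_tendsto_0)
  then have "filterlim (\<lambda>t. (eps - D * (ln t / t)) * t) at_top at_top"
    using assms by (intro filterlim_tendsto_pos_mult_at_top filterlim_ident) auto
  then have lim: "filterlim (\<lambda>t. - C + (eps - D * (ln t / t)) * t) at_top at_top"
    by (rule filterlim_tendsto_add_at_top[OF tendsto_const])
  have "\<forall>\<^sub>F t in at_top. - C + (eps - D * (ln t / t)) * t = eps * t - (C + D * ln t)"
    using eventually_gt_at_top[of "0::real"] by eventually_elim (simp add: field_simps)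
  from filterlim_cong[OF refl refl this] lim show ?thesis by simp
qed

section \<open>Trace, Frobenius norm and entrywise limits of matrices\<close>

lemma row_scalar_prod_col:
  assumes "i < dim_row P" "j < dim_col Q" "dim_col P = dim_row Q"
  shows "row P i \<bullet> col Q j = (\<Sum>l<dim_row Q. P $$ (i,l) * Q $$ (l,j))"
  using assms by (auto simp: scalar_prod_def lessThan_atLeast0 intro: sum.cong)

lemma mtrace_carrier: "A \<in> carrier_mat d d \<Longrightarrow> mtrace A = (\<Sum>i<d. A $$ (i,i))"
  unfolding mtrace_def by simp

lemma mtrace_mult_entries:
  assumes "A \<in> carrier_mat d d" "B \<in> carrier_mat d d"
  shows "mtrace (A * B) = (\<Sum>i<d. \<Sum>j<d. A $$ (i,j) * B $$ (j,i))"
  using assms unfolding mtrace_def by (simp add: row_scalar_prod_col)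

lemma mtrace_mult_comm:
  assumes "P \<in> carrier_mat a b" "Q \<in> carrier_mat b a"
  shows "mtrace (P * Q) = mtrace (Q * P)"
proof -
  have "mtrace (P * Q) = (\<Sum>i<a. \<Sum>k<b. P $$ (i,k) * Q $$ (k,i))"
    using assms unfolding mtrace_def by (simp add: row_scalar_prod_col)
  also have "\<dots> = (\<Sum>k<b. \<Sum>i<a. Q $$ (k,i) * P $$ (i,k))"
    by (subst sum.swap) (simp add: mult.commute)
  also have "\<dots> = mtrace (Q * P)"
    using assms unfolding mtrace_def by (simp add: row_scalar_prod_col)
  finally show ?thesis .
qed

lemma mtrace_add_diff:
  assumes "P \<in> carrier_mat a a" "Q \<in> carrier_mat a a"
  shows "mtrace (P + Q) = mtrace P + mtrace Q" "mtrace (P - Q) = mtrace P - mtrace Q"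
  using assms unfolding mtrace_def by (auto simp: sum.distrib sum_subtractf)

lemma mtrace_smult: "M \<in> carrier_mat d d \<Longrightarrow> mtrace (c \<cdot>\<^sub>m M) = c * mtrace M"
  unfolding mtrace_def by (simp add: sum_distrib_left)

lemma mtrace_square_symmetric:
  assumes "M \<in> carrier_mat d d" "transpose_mat M = M"
  shows "mtrace (M * M) = (\<Sum>i<d. \<Sum>j<d. M $$ (i,j) * M $$ (i,j))"
proof -
  have "M $$ (j,i) = M $$ (i,j)" if "i < d" "j < d" for i j
    using assms that by (metis carrier_matD index_transpose_mat(1))
  then show ?thesis using mtrace_mult_entries[OF assms(1,1)] by simp
qed

lemma mtrace_congruence:
  assumes E: "E \<in> carrier_mat a b" and L: "L \<in> carrier_mat b b" and S: "S \<in> carrier_mat a a"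
  shows "mtrace (E * L * transpose_mat E * S) = mtrace (L * (transpose_mat E * S * E))"
proof -
  have Et: "transpose_mat E \<in> carrier_mat b a" using E by simp
  have "E * L * transpose_mat E * S = E * (L * (transpose_mat E * S))"
    using assoc_mult_mat[OF mult_carrier_mat[OF E L] Et S] assoc_mult_mat[OF E L mult_carrier_mat[OF Et S]]
    by simp
  then have "mtrace (E * L * transpose_mat E * S) = mtrace (L * (transpose_mat E * S) * E)"
    using E L Et S by (simp add: mtrace_mult_comm[of E a b])
  also have "L * (transpose_mat E * S) * E = L * (transpose_mat E * S * E)"
    using assoc_mult_mat[OF L mult_carrier_mat[OF Et S] E] by simp
  finally show ?thesis .
qed

lemma fro_nonneg: "0 \<le> fro M"
  unfolding fro_def by (auto intro!: sum_nonneg)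

lemma fro_smult: "fro (c \<cdot>\<^sub>m M) = \<bar>c\<bar> * fro M"
proof -
  have "(\<Sum>i<dim_row M. \<Sum>j<dim_col M. ((c \<cdot>\<^sub>m M) $$ (i,j))\<^sup>2)
      = c\<^sup>2 * (\<Sum>i<dim_row M. \<Sum>j<dim_col M. (M $$ (i,j))\<^sup>2)"
    by (simp add: sum_distrib_left power_mult_distrib)
  then show ?thesis unfolding fro_def by (simp add: real_sqrt_mult)
qed

lemma abs_entry_le_fro:
  assumes "i < dim_row M" "j < dim_col M"
  shows "\<bar>M $$ (i,j)\<bar> \<le> fro M"
proof -
  have "(M $$ (i,j))\<^sup>2 \<le> (\<Sum>j<dim_col M. (M $$ (i,j))\<^sup>2)"
    using assms by (intro member_le_sum) auto
  also have "\<dots> \<le> (\<Sum>i<dim_row M. \<Sum>j<dim_col M. (M $$ (i,j))\<^sup>2)"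
    using assms by (intro member_le_sum[of i _ "\<lambda>i. \<Sum>j<dim_col M. (M $$ (i,j))\<^sup>2"] sum_nonneg) auto
  finally show ?thesis unfolding fro_def by (metis real_sqrt_abs real_sqrt_le_mono)
qed

definition mat_tendsto :: "(nat \<Rightarrow> real mat) \<Rightarrow> real mat \<Rightarrow> bool" where
  "mat_tendsto M L \<longleftrightarrow> (\<forall>k. M k \<in> carrier_mat (dim_row L) (dim_col L)) \<and>
     (\<forall>i<dim_row L. \<forall>j<dim_col L. (\<lambda>k. M k $$ (i,j)) \<longlonglongrightarrow> L $$ (i,j))"

lemma mat_tendsto_const: "mat_tendsto (\<lambda>k. L) L"
  unfolding mat_tendsto_def by auto

lemma mat_tendsto_mult:
  assumes "mat_tendsto M L" "mat_tendsto N K" "dim_col L = dim_row K"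
  shows "mat_tendsto (\<lambda>k. M k * N k) (L * K)"
proof -
  have M: "M k \<in> carrier_mat (dim_row L) (dim_col L)" and N: "N k \<in> carrier_mat (dim_row K) (dim_col K)"
    for k using assms unfolding mat_tendsto_def by blast+
  have "(\<lambda>k. \<Sum>l<dim_row K. M k $$ (i,l) * N k $$ (l,j)) \<longlonglongrightarrow> (\<Sum>l<dim_row K. L $$ (i,l) * K $$ (l,j))"
    if "i < dim_row L" "j < dim_col K" for i j
    using assms that unfolding mat_tendsto_def by (intro tendsto_intros) auto
  moreover have "dim_row (M k) = dim_row L" "dim_col (M k) = dim_row K"
    "dim_row (N k) = dim_row K" "dim_col (N k) = dim_col K" for k
    using M N assms(3) by auto
  ultimately show ?thesis
    using assms(3) unfolding mat_tendsto_def by (auto simp: row_scalar_prod_col)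
qed

lemma mat_tendsto_add_diff:
  assumes "mat_tendsto M L" "mat_tendsto N K" "L \<in> carrier_mat a b" "K \<in> carrier_mat a b"
  shows "mat_tendsto (\<lambda>k. M k + N k) (L + K)" "mat_tendsto (\<lambda>k. M k - N k) (L - K)"
proof -
  have M: "M k \<in> carrier_mat a b" and N: "N k \<in> carrier_mat a b" for k
    using assms unfolding mat_tendsto_def by auto
  then have dims: "dim_row (M k) = a" "dim_col (M k) = b" "dim_row (N k) = a" "dim_col (N k) = b"
    for k by auto
  have "(\<lambda>k. M k $$ (i,j) + N k $$ (i,j)) \<longlonglongrightarrow> L $$ (i,j) + K $$ (i,j)"
       "(\<lambda>k. M k $$ (i,j) - N k $$ (i,j)) \<longlonglongrightarrow> L $$ (i,j) - K $$ (i,j)"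
    if "i < a" "j < b" for i j
    using assms that unfolding mat_tendsto_def by (auto intro!: tendsto_intros)
  then show "mat_tendsto (\<lambda>k. M k + N k) (L + K)" "mat_tendsto (\<lambda>k. M k - N k) (L - K)"
    using M N dims assms(3,4) unfolding mat_tendsto_def by auto
qed

lemma tendsto_mtrace:
  assumes "mat_tendsto M L" "L \<in> carrier_mat d d"
  shows "(\<lambda>k. mtrace (M k)) \<longlonglongrightarrow> mtrace L"
proof -
  have M: "M k \<in> carrier_mat d d" for k
    using assms unfolding mat_tendsto_def by auto
  have "(\<lambda>k. \<Sum>i<d. M k $$ (i,i)) \<longlonglongrightarrow> (\<Sum>i<d. L $$ (i,i))"
    using assms unfolding mat_tendsto_def by (intro tendsto_intros) auto
  then show ?thesis using mtrace_carrier[OF assms(2)] mtrace_carrier[OF M] by simp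
qed

lemma mat_tendsto_fro_zero:
  assumes "mat_tendsto M L" "(\<lambda>k. fro (M k)) \<longlonglongrightarrow> 0"
  shows "L = 0\<^sub>m (dim_row L) (dim_col L)"
proof (rule eq_matI)
  fix i j assume ij: "i < dim_row (0\<^sub>m (dim_row L) (dim_col L) :: real mat)"
    "j < dim_col (0\<^sub>m (dim_row L) (dim_col L) :: real mat)"
  have M: "M k \<in> carrier_mat (dim_row L) (dim_col L)" for k
    using assms(1) unfolding mat_tendsto_def by blast
  have "norm (M k $$ (i,j)) \<le> norm (fro (M k)) * 1" for k
    using abs_entry_le_fro[of i "M k" j] M[of k] ij fro_nonneg[of "M k"] by auto
  then have "(\<lambda>k. M k $$ (i,j)) \<longlonglongrightarrow> 0"
    by (intro tendsto_0_le[OF assms(2), of _ 1]) simp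
  moreover have "(\<lambda>k. M k $$ (i,j)) \<longlonglongrightarrow> L $$ (i,j)"
    using assms(1) ij unfolding mat_tendsto_def by auto
  ultimately show "L $$ (i,j) = 0\<^sub>m (dim_row L) (dim_col L) $$ (i,j)"
    using ij LIMSEQ_unique by auto
qed auto

section \<open>Positive semidefinite forms and positive definite matrices\<close>

definition qform :: "nat \<Rightarrow> (nat \<Rightarrow> nat \<Rightarrow> real) \<Rightarrow> (nat \<Rightarrow> real) \<Rightarrow> (nat \<Rightarrow> real) \<Rightarrow> real" where
  "qform d A f g = (\<Sum>i<d. \<Sum>j<d. f i * A i j * g j)"

lemma qform_add_left: "qform d A (\<lambda>i. f i + g i) h = qform d A f h + qform d A g h"
  unfolding qform_def by (simp add: algebra_simps sum.distrib)

lemma qform_add_right: "qform d A h (\<lambda>i. f i + g i) = qform d A h f + qform d A h g"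
  unfolding qform_def by (simp add: algebra_simps sum.distrib)

lemma qform_scale_left: "qform d A (\<lambda>i. c * f i) h = c * qform d A f h"
  unfolding qform_def by (simp add: algebra_simps sum_distrib_left)

lemma qform_scale_right: "qform d A h (\<lambda>i. c * f i) = c * qform d A h f"
  unfolding qform_def by (simp add: algebra_simps sum_distrib_left)

lemma qform_indicator_left:
  assumes "p < d"
  shows "qform d A (\<lambda>i. if i = p then 1 else 0) h = (\<Sum>j<d. A p j * h j)"
proof -
  have "(\<Sum>j<d. (if i = p then 1 else 0) * A i j * h j) = (if i = p then (\<Sum>j<d. A p j * h j) else 0)" for i
    by auto
  then show ?thesis unfolding qform_def using assms by (simp add: sum.delta)
qed

lemma qform_indicator_right:
  assumes "p < d"
  shows "qform d A h (\<lambda>i. if i = p then 1 else 0) = (\<Sum>i<d. h i * A i p)"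
proof -
  have "(\<Sum>j<d. h i * A i j * (if j = p then 1 else 0)) = (\<Sum>j<d. if j = p then h i * A i p else 0)" for i
    by (rule sum.cong) auto
  then show ?thesis unfolding qform_def using assms by (simp add: sum.delta)
qed

lemma qform_indicator:
  "p < d \<Longrightarrow> q < d \<Longrightarrow> qform d A (\<lambda>i. if i = p then 1 else 0) (\<lambda>i. if i = q then 1 else 0) = A p q"
  by (simp add: qform_indicator_left if_distrib cong: if_cong)

lemma psd_diag_nonneg:
  assumes "\<forall>f. 0 \<le> qform d A f f" "p < d"
  shows "0 \<le> A p p"
  using assms(1) qform_indicator[OF assms(2,2)] by metis

lemma psd_two_point:
  assumes "\<forall>f. 0 \<le> qform d A f f" "p < d" "q < d"
  shows "0 \<le> a * a * A p p + a * b * (A p q + A q p) + b * b * A q q"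
  using assms(1)[rule_format, of "\<lambda>i. a * (if i = p then 1 else 0) + b * (if i = q then 1 else 0)"] assms(2,3)
  by (simp add: qform_add_left qform_add_right qform_scale_left qform_scale_right qform_indicator algebra_simps)

lemma psd_offdiag_bound:
  assumes "\<forall>i<d. \<forall>j<d. A i j = A j i" "\<forall>f. 0 \<le> qform d A f f" "p < d" "q < d"
  shows "2 * \<bar>A p q\<bar> \<le> A p p + A q q"
  using psd_two_point[OF assms(2-4), of 1 1] psd_two_point[OF assms(2-4), of 1 "-1"] assms(1,3,4)
  by (cases "0 \<le> A p q") auto

lemma psd_offdiag_zero:
  assumes "\<forall>i<d. \<forall>j<d. A i j = A j i" "\<forall>f. 0 \<le> qform d A f f" "p < d" "q < d" "A p p = 0"
  shows "A p q = 0"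
proof (rule ccontr)
  assume nz: "A p q \<noteq> 0"
  define a where "a = - (A q q + 1) / (2 * A p q)"
  have "0 \<le> a * a * A p p + a * 1 * (A p q + A q p) + 1 * 1 * A q q"
    using psd_two_point[OF assms(2-4)] .
  also have "\<dots> = - 1"
    using assms(1,3,4,5) nz unfolding a_def by (simp add: field_simps)
  finally show False by simp
qed

text \<open>The form below is the Schur complement of the pivot entry \<open>A p p\<close>.\<close>

lemma psd_pivot_complement:
  assumes sym: "\<forall>i<d. \<forall>j<d. A i j = A j i" and psd: "\<forall>f. 0 \<le> qform d A f f"
    and p: "p < d" "0 < A p p"
  shows "\<forall>f. 0 \<le> qform d (\<lambda>i j. A i j - A i p * A j p / A p p) f f"
proof
  fix f
  define s where "s = (\<Sum>i<d. f i * A i p)"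
  define c where "c = - s / A p p"
  define g where "g i = f i + c * (if i = p then 1 else 0)" for i
  have s': "(\<Sum>j<d. A p j * f j) = s"
    unfolding s_def using sym p(1) by (intro sum.cong) (auto simp: mult.commute)
  have "qform d (\<lambda>i j. A i j - A i p * A j p / A p p) f f = qform d A f f - s * s / A p p"
    unfolding qform_def s_def sum_product
    by (simp add: algebra_simps sum_subtractf sum_divide_distrib)
  also have "\<dots> = qform d A f f + c * s + c * s + c * c * A p p"
    using p(2) unfolding c_def by (simp add: field_simps)
  also have "\<dots> = qform d A g g"
    using p(1) unfolding g_def
    by (simp add: qform_add_left qform_add_right qform_scale_left qform_scale_right qform_indicator
        qform_indicator_left qform_indicator_right s' s_def[symmetric])
  finally show "0 \<le> qform d (\<lambda>i j. A i j - A i p * A j p / A p p) f f"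
    using psd by simp
qed

lemma psd_sum_rank_one:
  assumes "\<forall>i<d. \<forall>j<d. A i j = A j i" "\<forall>f. 0 \<le> qform d A f f"
  shows "\<exists>ws. \<forall>i<d. \<forall>j<d. A i j = (\<Sum>w\<leftarrow>ws. w i * w j)"
  using assms
proof (induction "card {i. i < d \<and> A i i \<noteq> 0}" arbitrary: A rule: less_induct)
  case less
  show ?case
  proof (cases "\<exists>p<d. A p p \<noteq> 0")
    case False
    then have "\<forall>i<d. \<forall>j<d. A i j = 0" using psd_offdiag_zero[OF less.prems] by blast
    then show ?thesis by (intro exI[of _ "[]"]) simp
  next
    case True
    then obtain p where p: "p < d" "A p p \<noteq> 0" by blast
    have pos: "0 < A p p" using psd_diag_nonneg[OF less.prems(2) p(1)] p(2) by simp
    define w where "w i = A i p / sqrt (A p p)" for i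
    define B where "B i j = A i j - A i p * A j p / A p p" for i j
    have ww: "w i * w j = A i p * A j p / A p p" for i j
      using pos unfolding w_def by (simp add: field_simps)
    have symB: "\<forall>i<d. \<forall>j<d. B i j = B j i" using less.prems(1) by (simp add: B_def mult.commute)
    have psdB: "\<forall>f. 0 \<le> qform d B f f"
      unfolding B_def by (rule psd_pivot_complement[OF less.prems p(1) pos])
    have "{i. i < d \<and> B i i \<noteq> 0} \<subset> {i. i < d \<and> A i i \<noteq> 0}"
    proof
      show "{i. i < d \<and> B i i \<noteq> 0} \<subseteq> {i. i < d \<and> A i i \<noteq> 0}"
        using psd_offdiag_zero[OF less.prems _ p(1)] unfolding B_def by force
      have "B p p = 0" using pos by (simp add: B_def)
      then show "{i. i < d \<and> B i i \<noteq> 0} \<noteq> {i. i < d \<and> A i i \<noteq> 0}"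
        using p by blast
    qed
    then have "card {i. i < d \<and> B i i \<noteq> 0} < card {i. i < d \<and> A i i \<noteq> 0}"
      by (intro psubset_card_mono) auto
    then obtain ws where "\<forall>i<d. \<forall>j<d. B i j = (\<Sum>v\<leftarrow>ws. v i * v j)"
      using less.hyps[OF _ symB psdB] by blast
    moreover have "A i j = w i * w j + B i j" for i j
      unfolding B_def ww by simp
    ultimately have "\<forall>i<d. \<forall>j<d. A i j = (\<Sum>v\<leftarrow>w # ws. v i * v j)"
      by simp
    then show ?thesis by blast
  qed
qed

lemma psd_trace_mult_lower_bound:
  assumes "\<forall>i<d. \<forall>j<d. A i j = A j i" "\<forall>f. 0 \<le> qform d A f f"
    and "\<forall>i<d. \<forall>j<d. S i j = S j i" and eps: "\<forall>f. eps * (\<Sum>i<d. f i * f i) \<le> qform d S f f"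
  shows "eps * (\<Sum>i<d. A i i) \<le> (\<Sum>i<d. \<Sum>j<d. A i j * S j i)"
proof -
  obtain ws where A: "\<forall>i<d. \<forall>j<d. A i j = (\<Sum>w\<leftarrow>ws. w i * w j)"
    using psd_sum_rank_one[OF assms(1,2)] by blast
  have diag: "(\<Sum>i<d. \<Sum>w\<leftarrow>ws. w i * w i) = (\<Sum>w\<leftarrow>ws. \<Sum>i<d. w i * w i)"
    by (induction ws) (simp_all add: sum.distrib)
  have swap: "(\<Sum>i<d. \<Sum>j<d. (\<Sum>w\<leftarrow>ws. w i * w j) * S j i) = (\<Sum>w\<leftarrow>ws. \<Sum>i<d. \<Sum>j<d. w i * w j * S j i)"
    by (induction ws) (simp_all add: distrib_right sum.distrib)
  have "eps * (\<Sum>i<d. A i i) = (\<Sum>w\<leftarrow>ws. eps * (\<Sum>i<d. w i * w i))"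
    using A by (simp add: diag sum_list_const_mult)
  also have "\<dots> \<le> (\<Sum>w\<leftarrow>ws. qform d S w w)"
    using eps by (intro sum_list_mono) auto
  also have "\<dots> = (\<Sum>w\<leftarrow>ws. \<Sum>i<d. \<Sum>j<d. w i * w j * S j i)"
    unfolding qform_def using assms(3)
    by (intro arg_cong[where f=sum_list] map_cong refl sum.cong) (auto simp: mult_ac)
  also have "\<dots> = (\<Sum>i<d. \<Sum>j<d. A i j * S j i)"
    using A by (simp add: swap)
  finally show ?thesis .
qed

lemma scalar_prod_mult_vec_qform:
  assumes "M \<in> carrier_mat d d"
  shows "vec d f \<bullet> (M *\<^sub>v vec d f) = qform d (\<lambda>i j. M $$ (i,j)) f f"
proof -
  have "row M i \<bullet> vec d f = (\<Sum>j<d. M $$ (i,j) * f j)" if "i < d" for i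
    unfolding scalar_prod_def lessThan_atLeast0 using assms that by (intro sum.cong) auto
  then have "vec d f \<bullet> (M *\<^sub>v vec d f) = (\<Sum>i<d. f i * (\<Sum>j<d. M $$ (i,j) * f j))"
    using assms unfolding scalar_prod_def[of "vec d f"] lessThan_atLeast0 by (auto intro: sum.cong)
  then show ?thesis
    unfolding qform_def by (simp add: sum_distrib_left mult_ac)
qed

lemma posdef_qform_pos:
  assumes "posdef d M" "i0 < d" "f i0 \<noteq> 0"
  shows "0 < qform d (\<lambda>i j. M $$ (i,j)) f f"
proof -
  have "vec d f \<noteq> 0\<^sub>v d"
    using assms(2,3) by (metis index_vec index_zero_vec(1))
  then show ?thesis
    using assms(1) scalar_prod_mult_vec_qform[of M d f] unfolding posdef_def by auto
qed

lemma posdef_psd: "posdef d M \<Longrightarrow> 0 \<le> qform d (\<lambda>i j. M $$ (i,j)) f f"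
  using posdef_qform_pos[of d M _ f] unfolding qform_def by (cases "\<exists>i<d. f i \<noteq> 0") force+

lemma posdef_sym: "posdef d M \<Longrightarrow> \<forall>i<d. \<forall>j<d. M $$ (i,j) = M $$ (j,i)"
  unfolding posdef_def by (metis carrier_matD index_transpose_mat(1))

lemma qform_normalize:
  assumes "qform d A f f < e * (\<Sum>i<d. f i * f i)"
  shows "\<exists>g. (\<Sum>i<d. g i * g i) = 1 \<and> qform d A g g < e"
proof -
  define nr where "nr = (\<Sum>i<d. f i * f i)"
  have "nr \<noteq> 0"
  proof
    assume "nr = 0"
    then have "\<forall>i\<in>{..<d}. f i * f i = 0"
      unfolding nr_def by (subst (asm) sum_nonneg_eq_0_iff) auto
    then have "qform d A f f = 0" unfolding qform_def by simp
    then show False using assms \<open>nr = 0\<close> unfolding nr_def by simp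
  qed
  moreover have "0 \<le> nr" unfolding nr_def by (intro sum_nonneg) auto
  ultimately have nr: "0 < nr" by simp
  define c where "c = 1 / sqrt nr"
  have cc: "c * c = 1 / nr" unfolding c_def using nr by (simp add: field_simps)
  have "(\<Sum>i<d. c * f i * (c * f i)) = c * c * nr"
    unfolding nr_def by (simp add: sum_distrib_left mult_ac)
  moreover have "qform d A (\<lambda>i. c * f i) (\<lambda>i. c * f i) = c * c * qform d A f f"
    by (simp add: qform_scale_left qform_scale_right)
  moreover have "c * c * qform d A f f < c * c * (e * nr)"
    using assms cc nr unfolding nr_def by (intro mult_strict_left_mono) auto
  ultimately show ?thesis using cc nr by (intro exI[of _ "\<lambda>i. c * f i"]) simp
qed

lemma posdef_uniformly_positive:
  assumes "posdef d M"
  obtains eps where "eps > 0" "\<And>f. eps * (\<Sum>i<d. f i * f i) \<le> qform d (\<lambda>i j. M $$ (i,j)) f f"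
proof (rule ccontr)
  define Q where "Q f = qform d (\<lambda>i j. M $$ (i,j)) f f" for f
  assume "\<not> thesis"
  with that have neg: "\<forall>eps>0. \<exists>f. Q f < eps * (\<Sum>i<d. f i * f i)"
    unfolding Q_def by (meson not_le)
  have "\<exists>g. (\<Sum>i<d. g i * g i) = 1 \<and> Q g < inverse (real (Suc k))" for k
  proof -
    obtain f where "Q f < inverse (real (Suc k)) * (\<Sum>i<d. f i * f i)"
      using neg[rule_format, of "inverse (real (Suc k))"] by auto
    then show ?thesis unfolding Q_def by (rule qform_normalize)
  qed
  then obtain F where unit: "\<And>k. (\<Sum>i<d. F k i * F k i) = 1"
    and small: "\<And>k. Q (F k) < inverse (real (Suc k))" by metis
  obtain r h where r: "strict_mono r" and lim: "\<And>i. i \<in> {..<d} \<Longrightarrow> (\<lambda>k. F (r k) i) \<longlonglongrightarrow> h i"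
    and h: "(\<Sum>i<d. h i * h i) = 1"
    using unit_seq_convergent_subseq[of "{..<d}" F] unit by blast
  have "(\<lambda>k. Q (F (r k))) \<longlonglongrightarrow> Q h"
    unfolding Q_def qform_def using lim by (intro tendsto_intros) auto
  moreover have "(\<lambda>k. inverse (real (Suc (r k)))) \<longlonglongrightarrow> 0"
    using LIMSEQ_subseq_LIMSEQ[OF LIMSEQ_inverse_real_of_nat r] by (simp add: o_def)
  ultimately have "Q h \<le> 0"
    using small by (intro LIMSEQ_le) (auto intro: less_imp_le)
  moreover obtain i0 where "i0 < d" "h i0 \<noteq> 0"
    using h by (metis (no_types, lifting) lessThan_iff mult_zero_left sum.neutral zero_neq_one)
  ultimately show False using posdef_qform_pos[OF assms] unfolding Q_def by fastforce
qed

lemma abs_det_le_fact_pow: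
  fixes A :: "real mat"
  assumes A: "A \<in> carrier_mat d d" and b: "\<And>i j. i < d \<Longrightarrow> j < d \<Longrightarrow> \<bar>A $$ (i,j)\<bar> \<le> t"
  shows "\<bar>det A\<bar> \<le> fact d * t ^ d"
proof -
  have "\<bar>det A\<bar> \<le> (\<Sum>p | p permutes {0..<d}. \<bar>of_int (sign p) * (\<Prod>i = 0..<d. A $$ (i, p i))\<bar>)"
    unfolding det_def'[OF A] by (rule sum_abs)
  also have "\<dots> \<le> (\<Sum>p | p permutes {0..<d}. t ^ d)"
  proof (rule sum_mono)
    fix p assume "p \<in> {p. p permutes {0..<d}}"
    then have "p i < d" if "i < d" for i using permutes_in_image that by fastforce
    then have "(\<Prod>i = 0..<d. \<bar>A $$ (i, p i)\<bar>) \<le> (\<Prod>i = 0..<d. t)"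
      using b by (intro prod_mono) auto
    moreover have "\<bar>real_of_int (sign p)\<bar> = 1" by (simp add: sign_def)
    ultimately show "\<bar>of_int (sign p) * (\<Prod>i = 0..<d. A $$ (i, p i))\<bar> \<le> t ^ d"
      by (simp add: abs_mult abs_prod)
  qed
  also have "\<dots> = fact d * t ^ d"
    using card_permutations[of "{0..<d}" d] by simp
  finally show ?thesis .
qed

lemma posdef_abs_entry_le_mtrace:
  assumes "posdef d A" "i < d" "j < d"
  shows "\<bar>A $$ (i,j)\<bar> \<le> mtrace A"
proof -
  have A: "A \<in> carrier_mat d d" using assms(1) unfolding posdef_def by blast
  have diag: "0 \<le> A $$ (k,k)" if "k < d" for k
    using psd_diag_nonneg[OF _ that] posdef_psd[OF assms(1)] by blast
  have "A $$ (k,k) \<le> mtrace A" if "k < d" for k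
    unfolding mtrace_carrier[OF A] using diag that by (intro member_le_sum) auto
  moreover have "2 * \<bar>A $$ (i,j)\<bar> \<le> A $$ (i,i) + A $$ (j,j)"
    using psd_offdiag_bound[OF posdef_sym[OF assms(1)] _ assms(2,3)] posdef_psd[OF assms(1)] by blast
  ultimately show ?thesis using assms(2,3) by (smt (verit))
qed

lemma posdef_fro_le_mtrace:
  assumes "posdef d A"
  shows "fro A \<le> real d * mtrace A"
proof -
  have A: "A \<in> carrier_mat d d" using assms unfolding posdef_def by blast
  have "0 \<le> mtrace A"
  proof (cases "d = 0")
    case False
    then show ?thesis using posdef_abs_entry_le_mtrace[OF assms, of 0 0] by simp
  qed (simp add: mtrace_carrier[OF A])
  have "(\<Sum>i<d. \<Sum>j<d. (A $$ (i,j))\<^sup>2) \<le> (\<Sum>i<d. \<Sum>j<d. (mtrace A)\<^sup>2)"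
    using posdef_abs_entry_le_mtrace[OF assms]
    by (intro sum_mono) (metis abs_le_square_iff abs_of_nonneg lessThan_iff \<open>0 \<le> mtrace A\<close>)
  also have "\<dots> = (real d * mtrace A)\<^sup>2" by (simp add: power2_eq_square)
  finally have "sqrt (\<Sum>i<d. \<Sum>j<d. (A $$ (i,j))\<^sup>2) \<le> sqrt ((real d * mtrace A)\<^sup>2)"
    by (rule real_sqrt_le_mono)
  then show ?thesis using A \<open>0 \<le> mtrace A\<close> unfolding fro_def by simp
qed

lemma posdef_ln_det_le_mtrace:
  assumes "posdef d A" "1 \<le> mtrace A"
  shows "ln (det A) \<le> ln (fact d) + real d * ln (mtrace A)"
proof (cases "det A = 0")
  case True
  then show ?thesis using assms(2) by simp
next
  case False
  have A: "A \<in> carrier_mat d d" using assms(1) unfolding posdef_def by blast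
  have "ln (det A) = ln \<bar>det A\<bar>" by (cases "det A \<ge> 0") (simp_all add: ln_minus)
  also have "\<dots> \<le> ln (fact d * mtrace A ^ d)"
    using abs_det_le_fact_pow[OF A posdef_abs_entry_le_mtrace[OF assms(1)]] False assms(2)
    by (subst ln_le_cancel_iff) auto
  also have "\<dots> = ln (fact d) + real d * ln (mtrace A)"
    using assms(2) by (simp add: ln_mult ln_realpow)
  finally show ?thesis .
qed

lemma posdef_mtrace_mult_lower_bound:
  assumes "posdef d A" "posdef d S"
    and "\<And>f. eps * (\<Sum>i<d. f i * f i) \<le> qform d (\<lambda>i j. S $$ (i,j)) f f"
  shows "eps * mtrace A \<le> mtrace (A * S)"
proof -
  have "A \<in> carrier_mat d d" "S \<in> carrier_mat d d" using assms(1,2) unfolding posdef_def by blast+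
  then show ?thesis
    using psd_trace_mult_lower_bound[of d "\<lambda>i j. A $$ (i,j)" "\<lambda>i j. S $$ (i,j)" eps]
      posdef_sym[OF assms(1)] posdef_psd[OF assms(1)] posdef_sym[OF assms(2)] assms(3)
    by (simp add: mtrace_carrier mtrace_mult_entries)
qed

section \<open>The operator \<open>A\<close>\<close>

definition Amap :: "real mat \<Rightarrow> real mat \<Rightarrow> real mat \<times> real mat \<Rightarrow> real mat" where
  "Amap E U X = E * fst X * transpose_mat E + U * snd X * transpose_mat U - snd X"

definition sym_mat :: "nat \<Rightarrow> real mat \<Rightarrow> bool" where
  "sym_mat d M \<longleftrightarrow> M \<in> carrier_mat d d \<and> transpose_mat M = M"

definition ker_perp :: "nat \<Rightarrow> nat \<Rightarrow> real mat \<Rightarrow> real mat \<Rightarrow> real mat \<times> real mat \<Rightarrow> bool" where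
  "ker_perp D1 D2 E U X \<longleftrightarrow> sym_mat D1 (fst X) \<and> sym_mat D2 (snd X) \<and>
     (\<forall>Y. sym_mat D1 (fst Y) \<and> sym_mat D2 (snd Y) \<and> Amap E U Y = 0\<^sub>m D2 D2 \<longrightarrow> pinner X Y = 0)"

lemma Aop_eq_Amap: "Aop m n N = Amap (Emat m n N) (Umat m N)"
  by (rule ext) (simp add: Aop_def Amap_def)

lemma Amap_carrier:
  assumes "E \<in> carrier_mat D2 D1" "U \<in> carrier_mat D2 D2" "L \<in> carrier_mat D1 D1" "T \<in> carrier_mat D2 D2"
  shows "Amap E U (L, T) \<in> carrier_mat D2 D2"
  unfolding Amap_def using assms by auto

lemma Amap_smult:
  assumes E: "E \<in> carrier_mat D2 D1" and U: "U \<in> carrier_mat D2 D2"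
    and L: "L \<in> carrier_mat D1 D1" and T: "T \<in> carrier_mat D2 D2"
  shows "Amap E U (c \<cdot>\<^sub>m L, c \<cdot>\<^sub>m T) = c \<cdot>\<^sub>m Amap E U (L, T)"
proof -
  have "E * (c \<cdot>\<^sub>m L) * transpose_mat E = c \<cdot>\<^sub>m (E * L * transpose_mat E)"
    using E L by (simp add: mult_smult_distrib[of _ D2 D1] mult_smult_assoc_mat[of _ D2 D1])
  moreover have "U * (c \<cdot>\<^sub>m T) * transpose_mat U = c \<cdot>\<^sub>m (U * T * transpose_mat U)"
    using U T by (simp add: mult_smult_distrib[of _ D2 D2] mult_smult_assoc_mat[of _ D2 D2])
  ultimately show ?thesis
    unfolding Amap_def fst_conv snd_conv using E U L T by (intro eq_matI) (auto simp: algebra_simps)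
qed

lemma pinner_smult:
  assumes "L \<in> carrier_mat a a" "T \<in> carrier_mat b b" "L' \<in> carrier_mat a a" "T' \<in> carrier_mat b b"
  shows "pinner (c \<cdot>\<^sub>m L, c \<cdot>\<^sub>m T) (L', T') = c * pinner (L, T) (L', T')"
    and "pinner (L, T) (c \<cdot>\<^sub>m L', c \<cdot>\<^sub>m T') = c * pinner (L, T) (L', T')"
  unfolding pinner_def fst_conv snd_conv using assms
  by (simp_all add: mult_smult_assoc_mat[of _ a a] mult_smult_assoc_mat[of _ b b]
      mult_smult_distrib[of _ a a] mult_smult_distrib[of _ b b]
      mtrace_smult[of _ a] mtrace_smult[of _ b] distrib_left)

lemma mat_tendsto_Amap:
  assumes E: "E \<in> carrier_mat D2 D1" and U: "U \<in> carrier_mat D2 D2"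
    and "mat_tendsto Lk L" "L \<in> carrier_mat D1 D1" and "mat_tendsto Tk T" "T \<in> carrier_mat D2 D2"
  shows "mat_tendsto (\<lambda>k. Amap E U (Lk k, Tk k)) (Amap E U (L, T))"
proof -
  have "mat_tendsto (\<lambda>k. E * Lk k * transpose_mat E) (E * L * transpose_mat E)"
    by (rule mat_tendsto_mult[OF mat_tendsto_mult[OF mat_tendsto_const assms(3)] mat_tendsto_const])
      (use assms in auto)
  moreover have "mat_tendsto (\<lambda>k. U * Tk k * transpose_mat U) (U * T * transpose_mat U)"
    by (rule mat_tendsto_mult[OF mat_tendsto_mult[OF mat_tendsto_const assms(5)] mat_tendsto_const])
      (use assms in auto)
  ultimately show ?thesis
    unfolding Amap_def fst_conv snd_conv using assms
    by (intro mat_tendsto_add_diff(2)[of _ _ _ _ D2 D2] mat_tendsto_add_diff(1)[of _ _ _ _ D2 D2]) auto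
qed

lemma mat_tendsto_pinner:
  assumes "mat_tendsto L1 A1" "mat_tendsto L2 A2" "mat_tendsto T1 B1" "mat_tendsto T2 B2"
    "A1 \<in> carrier_mat a a" "A2 \<in> carrier_mat a a" "B1 \<in> carrier_mat b b" "B2 \<in> carrier_mat b b"
  shows "(\<lambda>k. pinner (L1 k, T1 k) (L2 k, T2 k)) \<longlonglongrightarrow> pinner (A1, B1) (A2, B2)"
proof -
  have "mat_tendsto (\<lambda>k. L1 k * L2 k) (A1 * A2)" "mat_tendsto (\<lambda>k. T1 k * T2 k) (B1 * B2)"
    using assms by (auto intro!: mat_tendsto_mult)
  then show ?thesis
    unfolding pinner_def fst_conv snd_conv using assms
    by (intro tendsto_add tendsto_mtrace[of _ _ a] tendsto_mtrace[of _ _ b]) auto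
qed

lemma sym_mat_limit:
  assumes "\<And>k. sym_mat d (M k)" and lim: "\<And>i j. i < d \<Longrightarrow> j < d \<Longrightarrow> (\<lambda>k. M k $$ (i,j)) \<longlonglongrightarrow> g (i,j)"
  shows "sym_mat d (mat d d g)" "mat_tendsto M (mat d d g)"
proof -
  have g: "g (j,i) = g (i,j)" if "i < d" "j < d" for i j
  proof -
    have "(\<lambda>k. M k $$ (j,i)) = (\<lambda>k. M k $$ (i,j))"
      using assms(1) that unfolding sym_mat_def by (metis carrier_matD index_transpose_mat(1))
    then show ?thesis using lim[OF that] lim[OF that(2,1)] by (metis LIMSEQ_unique)
  qed
  show "sym_mat d (mat d d g)"
    unfolding sym_mat_def
  proof (intro conjI eq_matI)
    fix i j assume "i < dim_row (mat d d g)" "j < dim_col (mat d d g)"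
    then show "transpose_mat (mat d d g) $$ (i,j) = mat d d g $$ (i,j)" using g[of i j] by simp
  qed auto
  show "mat_tendsto M (mat d d g)"
    using assms unfolding mat_tendsto_def sym_mat_def by auto
qed

lemma unit_pairs_convergent_subseq:
  fixes F :: "nat \<Rightarrow> real mat \<times> real mat"
  assumes sym: "\<And>k. sym_mat D1 (fst (F k))" "\<And>k. sym_mat D2 (snd (F k))"
    and unit: "\<And>k. pinner (F k) (F k) = 1"
  obtains r L T where "strict_mono r" "sym_mat D1 L" "sym_mat D2 T"
    "mat_tendsto (\<lambda>k. fst (F (r k))) L" "mat_tendsto (\<lambda>k. snd (F (r k))) T"
proof -
  define I where "I = ({..<D1} \<times> {..<D1}) <+> ({..<D2} \<times> {..<D2})"
  define G where "G k = case_sum (\<lambda>ij. fst (F k) $$ ij) (\<lambda>ij. snd (F k) $$ ij)" for k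
  have sq: "(\<Sum>x\<in>{..<d} \<times> {..<d}. M $$ x * M $$ x) = mtrace (M * M)" if "sym_mat d M" for d M
    using that mtrace_square_symmetric[of M d] unfolding sym_mat_def by (simp add: sum.cartesian_product')
  have "(\<Sum>x\<in>I. G k x * G k x) = pinner (F k) (F k)" for k
    using sq[OF sym(1)] sq[OF sym(2)] unfolding I_def G_def pinner_def by (simp add: sum.Plus o_def)
  moreover have "finite I" unfolding I_def by simp
  ultimately obtain r h where r: "strict_mono r" and lim: "\<And>x. x \<in> I \<Longrightarrow> (\<lambda>k. G (r k) x) \<longlonglongrightarrow> h x"
    using unit_seq_convergent_subseq[of I G] unit by metis
  have "(\<lambda>k. fst (F (r k)) $$ (i,j)) \<longlonglongrightarrow> h (Inl (i,j))" if "i < D1" "j < D1" for i j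
    using lim[of "Inl (i,j)"] that unfolding I_def G_def by auto
  moreover have "(\<lambda>k. snd (F (r k)) $$ (i,j)) \<longlonglongrightarrow> h (Inr (i,j))" if "i < D2" "j < D2" for i j
    using lim[of "Inr (i,j)"] that unfolding I_def G_def by auto
  ultimately show ?thesis
    using that[OF r] sym_mat_limit[of D1 "\<lambda>k. fst (F (r k))" "\<lambda>ij. h (Inl ij)"]
      sym_mat_limit[of D2 "\<lambda>k. snd (F (r k))" "\<lambda>ij. h (Inr ij)"] sym
    by blast
qed

lemma transpose_smult_mat: "transpose_mat (c \<cdot>\<^sub>m M) = c \<cdot>\<^sub>m transpose_mat M"
  by (rule eq_matI) auto

lemma ker_perp_normalize:
  assumes E: "E \<in> carrier_mat D2 D1" and U: "U \<in> carrier_mat D2 D2"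
    and X: "ker_perp D1 D2 E U X" and small: "fro (Amap E U X) < e * pnorm X"
  shows "\<exists>Y. ker_perp D1 D2 E U Y \<and> pinner Y Y = 1 \<and> fro (Amap E U Y) < e"
proof -
  obtain L T where LT: "X = (L, T)" by (cases X)
  have L: "sym_mat D1 L" and T: "sym_mat D2 T" using X unfolding ker_perp_def LT by auto
  then have cL: "L \<in> carrier_mat D1 D1" and cT: "T \<in> carrier_mat D2 D2" unfolding sym_mat_def by auto
  have "0 < e * pnorm X" using small fro_nonneg[of "Amap E U X"] by linarith
  moreover have "0 \<le> pinner X X"
    using L T mtrace_square_symmetric[of L D1] mtrace_square_symmetric[of T D2]
    unfolding LT pinner_def sym_mat_def by (simp add: add_nonneg_nonneg sum_nonneg)
  then have "0 \<le> pnorm X" unfolding pnorm_def by simp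
  ultimately have pn: "0 < pnorm X" by (simp add: zero_less_mult_iff)
  then have pos: "0 < pinner X X" unfolding pnorm_def by simp
  then have pp: "pnorm X * pnorm X = pinner X X" unfolding pnorm_def by simp
  define a where "a = 1 / pnorm X"
  define Y where "Y = (a \<cdot>\<^sub>m L, a \<cdot>\<^sub>m T)"
  have "ker_perp D1 D2 E U Y"
    unfolding ker_perp_def
  proof (intro conjI allI impI)
    show "sym_mat D1 (fst Y)" "sym_mat D2 (snd Y)"
      using L T unfolding Y_def sym_mat_def by (simp_all add: transpose_smult_mat)
    fix Z assume Z: "sym_mat D1 (fst Z) \<and> sym_mat D2 (snd Z) \<and> Amap E U Z = 0\<^sub>m D2 D2"
    then have "pinner X Z = 0" using X unfolding ker_perp_def by blast
    moreover have "pinner Y Z = a * pinner X Z"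
      using pinner_smult(1)[OF cL cT, of "fst Z" "snd Z" a] Z unfolding Y_def LT sym_mat_def by simp
    ultimately show "pinner Y Z = 0" by simp
  qed
  moreover have "pinner Y Y = 1"
    using pinner_smult[OF _ _ cL cT] cL cT pp pn pos unfolding Y_def LT a_def by simp
  moreover have "fro (Amap E U Y) < e"
    using Amap_smult[OF E U cL cT, of a] small pn
    unfolding Y_def LT a_def by (simp add: fro_smult field_simps)
  ultimately show ?thesis by blast
qed

lemma Amap_coercive:
  assumes E: "E \<in> carrier_mat D2 D1" and U: "U \<in> carrier_mat D2 D2"
  shows "\<exists>c>0. \<forall>X. ker_perp D1 D2 E U X \<longrightarrow> c * pnorm X \<le> fro (Amap E U X)"
proof (rule ccontr)
  assume "\<not> ?thesis"
  then have neg: "\<forall>c>0. \<exists>X. ker_perp D1 D2 E U X \<and> fro (Amap E U X) < c * pnorm X"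
    by (auto simp: not_le)
  have "\<forall>k. \<exists>Y. ker_perp D1 D2 E U Y \<and> pinner Y Y = 1 \<and> fro (Amap E U Y) < inverse (real (Suc k))"
  proof
    fix k
    obtain X where "ker_perp D1 D2 E U X" "fro (Amap E U X) < inverse (real (Suc k)) * pnorm X"
      using neg[rule_format, of "inverse (real (Suc k))"] by auto
    then show "\<exists>Y. ker_perp D1 D2 E U Y \<and> pinner Y Y = 1 \<and> fro (Amap E U Y) < inverse (real (Suc k))"
      by (rule ker_perp_normalize[OF E U])
  qed
  from choice[OF this] obtain F where
    "\<forall>k. ker_perp D1 D2 E U (F k) \<and> pinner (F k) (F k) = 1 \<and> fro (Amap E U (F k)) < inverse (real (Suc k))"
    by blast
  then have F: "\<And>k. ker_perp D1 D2 E U (F k)" "\<And>k. pinner (F k) (F k) = 1"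
    and small: "\<And>k. fro (Amap E U (F k)) < inverse (real (Suc k))" by simp_all
  have sym: "sym_mat D1 (fst (F k))" "sym_mat D2 (snd (F k))" for k
    using F(1)[of k] unfolding ker_perp_def by blast+
  obtain r L T where r: "strict_mono r" and LT: "sym_mat D1 L" "sym_mat D2 T"
    and limL: "mat_tendsto (\<lambda>k. fst (F (r k))) L" and limT: "mat_tendsto (\<lambda>k. snd (F (r k))) T"
    by (rule unit_pairs_convergent_subseq[OF sym F(2)])
  have cL: "L \<in> carrier_mat D1 D1" and cT: "T \<in> carrier_mat D2 D2" using LT unfolding sym_mat_def by auto
  have "(\<lambda>k. fro (Amap E U (F (r k)))) \<longlonglongrightarrow> 0"
  proof (rule tendsto_0_le[of "\<lambda>k. inverse (real (Suc (r k)))" _ _ 1])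
    show "(\<lambda>k. inverse (real (Suc (r k)))) \<longlonglongrightarrow> 0"
      using LIMSEQ_subseq_LIMSEQ[OF LIMSEQ_inverse_real_of_nat r] by (simp add: o_def)
    show "\<forall>\<^sub>F k in sequentially. norm (fro (Amap E U (F (r k)))) \<le> norm (inverse (real (Suc (r k)))) * 1"
      using small fro_nonneg by (intro always_eventually allI) (simp add: less_imp_le)
  qed
  moreover have "mat_tendsto (\<lambda>k. Amap E U (F (r k))) (Amap E U (L, T))"
    using mat_tendsto_Amap[OF E U limL cL limT cT] by simp
  ultimately have "Amap E U (L, T) = 0\<^sub>m D2 D2"
    using mat_tendsto_fro_zero carrier_matD[OF Amap_carrier[OF E U cL cT]] by metis
  then have "(\<lambda>k. pinner (F (r k)) (L, T)) = (\<lambda>k. 0)"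
    using F(1) LT unfolding ker_perp_def by auto
  moreover have "(\<lambda>k. pinner (F (r k)) (L, T)) \<longlonglongrightarrow> pinner (L, T) (L, T)"
    using mat_tendsto_pinner[OF limL mat_tendsto_const limT mat_tendsto_const cL cL cT cT] by simp
  ultimately have "pinner (L, T) (L, T) = 0" by (simp add: LIMSEQ_const_iff)
  moreover have "(\<lambda>k. pinner (F (r k)) (F (r k))) \<longlonglongrightarrow> pinner (L, T) (L, T)"
    using mat_tendsto_pinner[OF limL limL limT limT cL cL cT cT] by simp
  ultimately show False using F(2) by (simp add: LIMSEQ_const_iff)
qed

text \<open>This is where the invariance \<open>U\<^sup>T S U = S\<close> enters: the \<open>\<Theta>\<close>-terms of \<open>tr(A(\<Lambda>,\<Theta>) S)\<close> cancel.\<close>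

lemma mtrace_Amap_mult:
  assumes E: "E \<in> carrier_mat D2 D1" and U: "U \<in> carrier_mat D2 D2"
    and L: "L \<in> carrier_mat D1 D1" and T: "T \<in> carrier_mat D2 D2" and S: "S \<in> carrier_mat D2 D2"
    and inv: "transpose_mat U * S * U = S"
  shows "mtrace (Amap E U (L, T) * S) = mtrace (L * (transpose_mat E * S * E))"
proof -
  have ELE: "E * L * transpose_mat E \<in> carrier_mat D2 D2" and UTU: "U * T * transpose_mat U \<in> carrier_mat D2 D2"
    using E L U T by auto
  have "Amap E U (L, T) * S = E * L * transpose_mat E * S + U * T * transpose_mat U * S - T * S"
    unfolding Amap_def fst_conv snd_conv using ELE UTU T S
    by (simp add: add_mult_distrib_mat[of _ D2 D2] minus_mult_distrib_mat[of _ D2 D2])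
  then have "mtrace (Amap E U (L, T) * S)
      = mtrace (E * L * transpose_mat E * S) + mtrace (U * T * transpose_mat U * S) - mtrace (T * S)"
    using ELE UTU T S by (simp add: mtrace_add_diff[of _ D2])
  then show ?thesis
    using mtrace_congruence[OF E L S] mtrace_congruence[OF U T S] inv by simp
qed

lemma Amap_trace_minus_ln_det_lower_bound:
  assumes E: "E \<in> carrier_mat D2 D1" and U: "U \<in> carrier_mat D2 D2"
    and X: "fst X \<in> carrier_mat D1 D1" "snd X \<in> carrier_mat D2 D2"
    and A: "posdef D2 (Amap E U X)" and S: "posdef D2 S" "transpose_mat U * S * U = S"
    and eps: "\<And>f. eps * (\<Sum>i<D2. f i * f i) \<le> qform D2 (\<lambda>i j. S $$ (i,j)) f f"
    and t: "1 \<le> mtrace (Amap E U X)"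
  shows "eps * mtrace (Amap E U X) - (ln (fact D2) + real D2 * ln (mtrace (Amap E U X)))
    \<le> mtrace (fst X * (transpose_mat E * S * E)) - ln (det (Amap E U X))"
proof -
  have "S \<in> carrier_mat D2 D2" using S(1) unfolding posdef_def by blast
  then show ?thesis
    using posdef_mtrace_mult_lower_bound[OF A S(1) eps] posdef_ln_det_le_mtrace[OF A t]
      mtrace_Amap_mult[OF E U X _ S(2)] by fastforce
qed

lemma filterlim_mtrace_at_top:
  assumes "0 < d" "\<And>k. posdef d (A k)" "filterlim (\<lambda>k. fro (A k)) at_top F"
  shows "filterlim (\<lambda>k. mtrace (A k)) at_top F"
proof (rule filterlim_at_top_mono[OF filterlim_tendsto_pos_mult_at_top[OF tendsto_const _ assms(3)]])
  show "0 < 1 / real d" using assms(1) by simp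
  show "\<forall>\<^sub>F k in F. 1 / real d * fro (A k) \<le> mtrace (A k)"
    using posdef_fro_le_mtrace[OF assms(2)] assms(1)
    by (intro always_eventually allI) (simp add: field_simps mult.commute)
qed

theorem lemma4:
  fixes m n N :: nat and Sig :: "nat \<Rightarrow> real mat" and X :: "nat \<Rightarrow> real mat \<times> real mat"
  assumes "m \<ge> 1" and "n \<ge> 1" and "N > 2*n"
    and "\<And>i. i \<le> n \<Longrightarrow> Sig i \<in> carrier_mat m m"
    and "\<exists>S. posdef (m*N) S \<and>
           transpose_mat (Emat m n N) * S * Emat m n N = Tmat m n Sig \<and>
           transpose_mat (Umat m N) * S * Umat m N = S"
    and "\<And>k. X k \<in> Lplus m n N"
    and "filterlim (\<lambda>k. pnorm (X k)) at_top sequentially"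
  shows "filterlim (\<lambda>k. fro (Aop m n N (X k))) at_top sequentially \<and>
         filterlim (\<lambda>k. Jfun m n N Sig (X k)) at_top sequentially"
proof -
  define D1 D2 E U where "D1 = m * (n + 1)" "D2 = m * N" "E = Emat m n N" "U = Umat m N"
  have E: "E \<in> carrier_mat D2 D1" and U: "U \<in> carrier_mat D2 D2"
    unfolding D1_D2_E_U_def Emat_def Umat_def by simp_all
  have X: "ker_perp D1 D2 E U (X k)" "posdef D2 (Amap E U (X k))"
    and Xc: "fst (X k) \<in> carrier_mat D1 D1" "snd (X k) \<in> carrier_mat D2 D2" for k
    using assms(6)[of k] unfolding Lplus_def symS_def ker_perp_def sym_mat_def Aop_eq_Amap D1_D2_E_U_def
    by auto
  obtain c where c: "c > 0" "\<forall>X. ker_perp D1 D2 E U X \<longrightarrow> c * pnorm X \<le> fro (Amap E U X)"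
    using Amap_coercive[OF E U] by blast
  have fro_lim: "filterlim (\<lambda>k. fro (Amap E U (X k))) at_top sequentially"
    by (rule filterlim_at_top_mono[OF filterlim_tendsto_pos_mult_at_top[OF tendsto_const c(1) assms(7)]])
      (use c(2) X in \<open>blast intro: always_eventually\<close>)
  have tr_lim: "filterlim (\<lambda>k. mtrace (Amap E U (X k))) at_top sequentially"
    using filterlim_mtrace_at_top[OF _ X(2) fro_lim] assms(1,3) unfolding D1_D2_E_U_def by simp
  obtain S where S: "posdef D2 S" "transpose_mat E * S * E = Tmat m n Sig" "transpose_mat U * S * U = S"
    using assms(5) unfolding D1_D2_E_U_def by blast
  obtain eps where eps: "eps > 0" "\<And>f. eps * (\<Sum>i<D2. f i * f i) \<le> qform D2 (\<lambda>i j. S $$ (i,j)) f f"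
    using posdef_uniformly_positive[OF S(1)] by blast
  have "\<forall>\<^sub>F k in sequentially. eps * mtrace (Amap E U (X k))
      - (ln (fact D2) + real D2 * ln (mtrace (Amap E U (X k)))) \<le> Jfun m n N Sig (X k)"
    using filterlim_at_top_dense[THEN iffD1, OF tr_lim, rule_format, of 1]
    by eventually_elim
      (use Amap_trace_minus_ln_det_lower_bound[OF E U Xc X(2) S(1,3) eps(2)] in
        \<open>simp add: Jfun_def Aop_eq_Amap D1_D2_E_U_def[symmetric] S(2)\<close>)
  then have "filterlim (\<lambda>k. Jfun m n N Sig (X k)) at_top sequentially"
    by (rule filterlim_at_top_mono[OF filterlim_compose[OF linear_minus_log_at_top[OF eps(1)] tr_lim]])
  with fro_lim show ?thesis unfolding Aop_eq_Amap D1_D2_E_U_def by simp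
qed

end
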